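(* Consider $y=X\beta^\dagger+\eta$ with $X\in\mathbb{R}^{n\times p}$ having columns satisfying $\|X_j\|_2^2=n$, and assume (A1) $T\nu\le\frac14$; (A2) $|\beta^\dagger|_{\min}\ge78\lambda_u$; (A3) $\eta\sim N(0,\sigma^2I_n)$. Let $\gamma=8/13$, $\lambda_0=\|X^\top y/n\|_\infty$, $\lambda_t=\lambda_0\gamma^t$. Then, with probability at least $1-\frac{1}{2\sqrt{\pi\log p}}$, there exists an integer $N\in[1,\log_\gamma(10\delta_u/\lambda_0))$ such that $\lambda_N>10\delta_u\ge\lambda_{N+1}$ and $|\beta^\dagger|_{\min}>\frac85\lambda_N$.
   Context: $A^\dagger=\operatorname{supp}(\beta^\dagger)$, $T=|A^\dagger|$, $|\beta^\dagger|_{\min}=\min_{j\in A^\dagger}|\beta^\dagger_j|$; $\nu=\max_{i\ne j}|(X^\top X)_{ij}|/n$ is the mutual coherence; $\lambda_u=\sigma\sqrt{2\log(p)/n}$ and $\delta_u=3\lambda_u$. *)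

theory Defs
  imports "HOL-Probability.Probability"
begin

text \<open>Design matrix X (n x p) as a function with indices i < n (rows), j < p (columns);
vectors in R^p / R^n as functions nat => real with index guards.\<close>

definition supp :: "(nat \<Rightarrow> real) \<Rightarrow> nat \<Rightarrow> nat set" where
  "supp \<beta> p = {j. j < p \<and> \<beta> j \<noteq> 0}"

definition beta_min :: "(nat \<Rightarrow> real) \<Rightarrow> nat \<Rightarrow> real" where
  "beta_min \<beta> p = Min ((\<lambda>j. \<bar>\<beta> j\<bar>) ` supp \<beta> p)"

definition coherence :: "(nat \<Rightarrow> nat \<Rightarrow> real) \<Rightarrow> nat \<Rightarrow> nat \<Rightarrow> real" where
  "coherence X n p = Max {\<bar>\<Sum>i<n. X i j * X i k\<bar> / real n | j k. j < p \<and> k < p \<and> j \<noteq> k}"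

definition lam0 :: "(nat \<Rightarrow> nat \<Rightarrow> real) \<Rightarrow> nat \<Rightarrow> nat \<Rightarrow> (nat \<Rightarrow> real) \<Rightarrow> real" where
  "lam0 X n p y = Max {\<bar>\<Sum>i<n. X i j * y i\<bar> / real n | j. j < p}"

definition lambda_u :: "real \<Rightarrow> nat \<Rightarrow> nat \<Rightarrow> real" where
  "lambda_u \<sigma> n p = \<sigma> * sqrt (2 * ln (real p) / real n)"

definition delta_u :: "real \<Rightarrow> nat \<Rightarrow> nat \<Rightarrow> real" where
  "delta_u \<sigma> n p = 3 * lambda_u \<sigma> n p"

definition gam :: real where "gam = 8 / 13"

end

theory Submission
  imports Defs
begin

text \<open>Write a = X^T X beta / n and W = X^T eta / n, so that lambda_0 = max_j |a_j + W_j| and every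
W_j is N(0, sigma^2 / n). For a coordinate j0 maximising |beta_j|, incoherence gives
|a_j0| >= 3/4 |beta_j0| >= 3/4 * 78 lambda_u. On the event |W_j0| < 9 lambda_u, whose complement has
probability at most 1 / (162 log p) by Chebyshev, this forces lambda_0 gamma > 30 lambda_u = 10 delta_u,
so the geometric path lambda_t first drops below 10 delta_u at some step N + 1 with N >= 1. Then
lambda_N < 10 delta_u / gamma, and 8/5 * 10 delta_u / gamma = 78 lambda_u <= |beta|_min. The
inequality is strict because almost surely no lambda_t equals 10 delta_u exactly: the W_j have densities.\<close>

lemma real_less_log_of_less_power:
  fixes g y :: real
  assumes "0 < g" "g < 1" "0 < y" "y < g ^ N"
  shows "real N < log g y"
proof -
  have "ln y < real N * ln g"
    using assms ln_less_cancel_iff[of y "g ^ N"] by (simp add: ln_realpow)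
  moreover have "ln g < 0" using assms by simp
  ultimately show ?thesis by (simp add: log_def neg_less_divide_eq)
qed

lemma geometric_first_crossing:
  fixes g x L :: real
  assumes g: "0 < g" "g < 1" and L: "0 < L" "L < x * g" and avoid: "\<forall>k. x * g ^ k \<noteq> L"
  obtains N where "1 \<le> N" "L < x * g ^ N" "x * g ^ Suc N < L"
proof -
  have "0 < x * g" using L by linarith
  then have x: "0 < x" using g by (simp add: zero_less_mult_iff)
  obtain m0 where "g ^ m0 < L / x" using real_arch_pow_inv[of "L / x" g] g L x by auto
  then have below: "x * g ^ m0 < L" using x by (simp add: field_simps)
  define m where "m = (LEAST m. x * g ^ m < L)"
  have m: "x * g ^ m < L" unfolding m_def by (rule LeastI[of _ m0]) (rule below)
  have above: "L \<le> x * g ^ k" if "k < m" for k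
    using not_less_Least[of k "\<lambda>m. x * g ^ m < L"] that unfolding m_def by simp
  have "1 < m"
  proof (rule ccontr)
    assume "\<not> 1 < m"
    then have "g ^ 1 \<le> g ^ m" using g by (intro power_decreasing) auto
    then have "x * g \<le> x * g ^ m" using x by simp
    with m L show False by simp
  qed
  then obtain N where N: "m = Suc N" "1 \<le> N" by (cases m) auto
  have "L < x * g ^ N" using above[of N] avoid N by (metis le_less lessI)
  with N m show thesis using that by simp
qed

text \<open>x stands for lambda_0, L for the threshold 10 delta_u and b for |beta|_min.\<close>

definition crossing_index :: "real \<Rightarrow> real \<Rightarrow> real \<Rightarrow> nat \<Rightarrow> bool" where
  "crossing_index x L b N \<longleftrightarrow> 1 \<le> N \<and> real N < log gam (L / x)
     \<and> x * gam ^ N > L \<and> L \<ge> x * gam ^ (N + 1) \<and> b > 8 / 5 * (x * gam ^ N)"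

lemma crossing_index_exists:
  fixes x L b :: real
  assumes "0 < L" "L < x * gam" "\<forall>k. x * gam ^ k \<noteq> L" and b: "13 / 5 * L \<le> b"
  shows "\<exists>N. crossing_index x L b N"
proof -
  have gam: "0 < gam" "gam < 1" by (auto simp: gam_def)
  obtain N where N: "1 \<le> N" "L < x * gam ^ N" "x * gam ^ Suc N < L"
    using geometric_first_crossing[OF gam assms(1-3)] .
  have "0 < x * gam ^ N" using N assms(1) by linarith
  then have x: "0 < x" using gam by (simp add: zero_less_mult_iff)
  have "real N < log gam (L / x)"
    using N x assms(1) by (intro real_less_log_of_less_power gam) (auto simp: field_simps)
  moreover have "8 / 5 * (x * gam ^ N) < b"
  proof -
    have "x * gam ^ N < L / gam" using N gam by (simp add: field_simps)
    then show ?thesis using b by (simp add: gam_def)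
  qed
  ultimately show ?thesis using N unfolding crossing_index_def by auto
qed

lemma inverse_162_le_inverse_2_sqrt_pi:
  fixes x :: real
  assumes x: "1 / 2 \<le> x"
  shows "1 / (162 * x) \<le> 1 / (2 * sqrt (pi * x))"
proof -
  have "pi * x \<le> 4 * x" using x pi_less_4 by (intro mult_right_mono) auto
  also have "\<dots> \<le> (81 * x)\<^sup>2" using x by (simp add: power2_eq_square)
  finally have "sqrt (pi * x) \<le> 81 * x" using x by (simp add: real_le_lsqrt)
  then show ?thesis using x by (intro divide_left_mono) auto
qed

definition col_inner :: "(nat \<Rightarrow> nat \<Rightarrow> real) \<Rightarrow> nat \<Rightarrow> (nat \<Rightarrow> real) \<Rightarrow> nat \<Rightarrow> real" where
  "col_inner X n y j = (\<Sum>i<n. X i j * y i) / real n"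

lemma col_inner_add: "col_inner X n (\<lambda>i. y i + z i) j = col_inner X n y j + col_inner X n z j"
  by (simp add: col_inner_def distrib_left sum.distrib add_divide_distrib)

lemma lam0_eq_Max_col_inner: "lam0 X n p y = Max ((\<lambda>j. \<bar>col_inner X n y j\<bar>) ` {..<p})"
  unfolding lam0_def col_inner_def by (simp add: abs_divide) (rule arg_cong[where f = Max], auto)

lemma col_inner_le_lam0:
  assumes "j < p"
  shows "\<bar>col_inner X n y j\<bar> \<le> lam0 X n p y"
  unfolding lam0_eq_Max_col_inner using assms by (intro Max_ge) auto

lemma lam0_in_col_inners:
  assumes "1 \<le> p"
  shows "lam0 X n p y \<in> (\<lambda>j. \<bar>col_inner X n y j\<bar>) ` {..<p}"
  unfolding lam0_eq_Max_col_inner using assms by (intro Max_in) (auto simp: lessThan_empty_iff)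

lemma abs_gram_le_coherence:
  assumes "j < p" "k < p" "j \<noteq> k"
  shows "\<bar>\<Sum>i<n. X i j * X i k\<bar> / real n \<le> coherence X n p"
proof -
  let ?S = "{\<bar>\<Sum>i<n. X i j * X i k\<bar> / real n | j k. j < p \<and> k < p \<and> j \<noteq> k}"
  have "?S \<subseteq> (\<lambda>(j, k). \<bar>\<Sum>i<n. X i j * X i k\<bar> / real n) ` ({..<p} \<times> {..<p})" by auto
  then have "finite ?S" by (rule finite_subset) auto
  then show ?thesis unfolding coherence_def using assms by (intro Max_ge) auto
qed

lemma coherence_nonneg:
  assumes "2 \<le> p"
  shows "0 \<le> coherence X n p"
proof -
  have "\<bar>\<Sum>i<n. X i 0 * X i 1\<bar> / real n \<le> coherence X n p"
    using assms by (intro abs_gram_le_coherence) auto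
  moreover have "0 \<le> \<bar>\<Sum>i<n. X i 0 * X i 1\<bar> / real n" by simp
  ultimately show ?thesis by linarith
qed

lemma abs_sum_off_diagonal_gram_le:
  assumes n: "1 \<le> n" and p: "2 \<le> p" and j0: "j0 \<in> supp \<beta> p"
    and max: "\<forall>k\<in>supp \<beta> p. \<bar>\<beta> k\<bar> \<le> \<bar>\<beta> j0\<bar>"
    and incoherent: "real (card (supp \<beta> p)) * coherence X n p \<le> 1 / 4"
  shows "\<bar>\<Sum>k\<in>supp \<beta> p - {j0}. (\<Sum>i<n. X i j0 * X i k) * \<beta> k\<bar> \<le> real n * \<bar>\<beta> j0\<bar> / 4"
proof -
  let ?S = "supp \<beta> p" and ?\<nu> = "coherence X n p"
  have fin: "finite ?S" unfolding supp_def by auto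
  have each: "\<bar>(\<Sum>i<n. X i j0 * X i k) * \<beta> k\<bar> \<le> real n * ?\<nu> * \<bar>\<beta> j0\<bar>" if k: "k \<in> ?S - {j0}" for k
  proof -
    have "\<bar>\<Sum>i<n. X i j0 * X i k\<bar> \<le> real n * ?\<nu>"
      using abs_gram_le_coherence[of j0 p k X n] k j0 n
      by (auto simp: supp_def field_simps)
    moreover have "\<bar>\<beta> k\<bar> \<le> \<bar>\<beta> j0\<bar>" using max k by auto
    ultimately show ?thesis by (simp add: abs_mult mult_mono)
  qed
  have "\<bar>\<Sum>k\<in>?S - {j0}. (\<Sum>i<n. X i j0 * X i k) * \<beta> k\<bar> \<le> (\<Sum>k\<in>?S - {j0}. real n * ?\<nu> * \<bar>\<beta> j0\<bar>)"
    using each by (intro order.trans[OF sum_abs] sum_mono) auto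
  also have "\<dots> \<le> real (card ?S) * (real n * ?\<nu> * \<bar>\<beta> j0\<bar>)"
    using fin coherence_nonneg[OF p] by (auto intro!: mult_right_mono card_mono)
  also have "\<dots> = real n * \<bar>\<beta> j0\<bar> * (real (card ?S) * ?\<nu>)" by simp
  also have "\<dots> \<le> real n * \<bar>\<beta> j0\<bar> * (1 / 4)" using incoherent by (intro mult_left_mono) auto
  finally show ?thesis by simp
qed

lemma abs_col_inner_signal_ge:
  assumes n: "1 \<le> n" and p: "2 \<le> p" and cols: "\<forall>j<p. (\<Sum>i<n. (X i j)\<^sup>2) = real n"
    and j0: "j0 \<in> supp \<beta> p" and max: "\<forall>k\<in>supp \<beta> p. \<bar>\<beta> k\<bar> \<le> \<bar>\<beta> j0\<bar>"
    and incoherent: "real (card (supp \<beta> p)) * coherence X n p \<le> 1 / 4"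
  shows "3 / 4 * \<bar>\<beta> j0\<bar> \<le> \<bar>col_inner X n (\<lambda>i. \<Sum>k<p. X i k * \<beta> k) j0\<bar>"
proof -
  let ?G = "\<lambda>k. \<Sum>i<n. X i j0 * X i k" and ?R = "\<Sum>k\<in>supp \<beta> p - {j0}. (\<Sum>i<n. X i j0 * X i k) * \<beta> k"
  have j0p: "j0 < p" using j0 by (simp add: supp_def)
  have "(\<Sum>i<n. X i j0 * (\<Sum>k<p. X i k * \<beta> k)) = (\<Sum>k<p. ?G k * \<beta> k)"
    by (simp add: sum_distrib_left sum_distrib_right sum.swap[of _ "{..<n}"] ac_simps)
  then have "real n * col_inner X n (\<lambda>i. \<Sum>k<p. X i k * \<beta> k) j0 = (\<Sum>k<p. ?G k * \<beta> k)"
    using n by (simp add: col_inner_def)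
  also have "\<dots> = (\<Sum>k\<in>supp \<beta> p. ?G k * \<beta> k)"
    by (rule sum.mono_neutral_right) (auto simp: supp_def)
  also have "\<dots> = ?G j0 * \<beta> j0 + ?R"
    using j0 by (simp add: supp_def sum.remove)
  also have "?G j0 = real n" using cols j0p by (simp add: power2_eq_square)
  finally have eq: "real n * col_inner X n (\<lambda>i. \<Sum>k<p. X i k * \<beta> k) j0 = real n * \<beta> j0 + ?R" .
  let ?c = "col_inner X n (\<lambda>i. \<Sum>k<p. X i k * \<beta> k) j0"
  have "real n * \<bar>\<beta> j0\<bar> = \<bar>real n * ?c - ?R\<bar>" using eq by (simp add: abs_mult)
  also have "\<dots> \<le> \<bar>real n * ?c\<bar> + \<bar>?R\<bar>" by (rule abs_triangle_ineq4)
  finally have "real n * \<bar>\<beta> j0\<bar> \<le> real n * \<bar>?c\<bar> + \<bar>?R\<bar>" by (simp add: abs_mult)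
  moreover have "\<bar>?R\<bar> \<le> real n * \<bar>\<beta> j0\<bar> / 4"
    by (rule abs_sum_off_diagonal_gram_le[OF n p j0 max incoherent])
  ultimately have "real n * (3 / 4 * \<bar>\<beta> j0\<bar>) \<le> real n * \<bar>?c\<bar>"
    by linarith
  then show ?thesis using n by simp
qed

lemma (in prob_space) weighted_sum_indep_normal:
  fixes \<eta> :: "nat \<Rightarrow> 'a \<Rightarrow> real" and w :: "nat \<Rightarrow> real"
  assumes indep: "indep_vars (\<lambda>_. borel) \<eta> {..<n}"
    and normal: "\<forall>i<n. distributed M lborel (\<eta> i) (normal_density 0 \<sigma>)"
    and \<sigma>: "0 < \<sigma>" and nonzero: "\<exists>i<n. w i \<noteq> 0"
  shows "distributed M lborel (\<lambda>\<omega>. \<Sum>i<n. w i * \<eta> i \<omega>)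
           (normal_density 0 (\<sigma> * sqrt (\<Sum>i<n. (w i)\<^sup>2)))"
proof -
  define I where "I = {i. i < n \<and> w i \<noteq> 0}"
  have I: "finite I" "I \<noteq> {}" "I \<subseteq> {..<n}" using nonzero unfolding I_def by auto
  have "indep_vars (\<lambda>_. borel) (\<lambda>i x. w i * \<eta> i x) I"
    using indep_vars_compose2[OF indep_vars_subset[OF indep I(3)], of "\<lambda>i x. w i * x" "\<lambda>_. borel"]
    by simp
  moreover have "distributed M lborel (\<lambda>x. w i * \<eta> i x) (normal_density 0 (\<bar>w i\<bar> * \<sigma>))" if "i \<in> I" for i
    using normal_density_affine[of "\<eta> i" 0 \<sigma> "w i" 0] normal \<sigma> that unfolding I_def by auto
  ultimately have "distributed M lborel (\<lambda>x. \<Sum>i\<in>I. w i * \<eta> i x)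
      (normal_density (\<Sum>i\<in>I. 0) (sqrt (\<Sum>i\<in>I. (\<bar>w i\<bar> * \<sigma>)\<^sup>2)))"
    using I \<sigma> by (intro sum_indep_normal) (auto simp: I_def)
  moreover have "(\<lambda>x. \<Sum>i\<in>I. w i * \<eta> i x) = (\<lambda>\<omega>. \<Sum>i<n. w i * \<eta> i \<omega>)"
    by (rule ext, rule sum.mono_neutral_left) (auto simp: I_def)
  moreover have "(\<Sum>i\<in>I. (\<bar>w i\<bar> * \<sigma>)\<^sup>2) = \<sigma>\<^sup>2 * (\<Sum>i<n. (w i)\<^sup>2)"
    by (subst sum.mono_neutral_left[of "{..<n}"])
       (auto simp: I_def sum_distrib_left power_mult_distrib mult.commute)
  ultimately show ?thesis using \<sigma> by (simp add: real_sqrt_mult)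
qed

lemma (in prob_space) AE_distributed_lborel_neq:
  assumes "distributed M lborel W f"
  shows "AE \<omega> in M. W \<omega> \<noteq> d"
proof -
  have "AE x in density lborel f. x \<noteq> d"
    using AE_lborel_singleton[of d] distributed_borel_measurable[OF assms]
    by (subst AE_density) (auto elim: AE_mp)
  then have "AE x in distr M lborel W. x \<noteq> d"
    unfolding distributed_distr_eq_density[OF assms] .
  then show ?thesis using AE_distrD[OF distributed_measurable[OF assms]] by blast
qed

lemma (in prob_space) Chebyshev_normal:
  assumes s: "0 < s" and W: "distributed M lborel W (normal_density 0 s)" and t: "0 < t"
  shows "prob {\<omega> \<in> space M. t \<le> \<bar>W \<omega>\<bar>} \<le> s\<^sup>2 / t\<^sup>2"
proof -
  have [measurable]: "W \<in> borel_measurable M" using distributed_measurable[OF W] by simp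
  have "integrable lborel (\<lambda>x. normal_density 0 s x * (x - 0) ^ 2)"
    using s by (rule integrable_normal_moment)
  then have "integrable M (\<lambda>x. W x ^ 2)"
    using distributed_integrable[OF W, of "\<lambda>x. x ^ 2"] by simp
  then have "prob {\<omega> \<in> space M. t \<le> \<bar>W \<omega> - expectation W\<bar>} \<le> variance W / t\<^sup>2"
    using t by (intro Chebyshev_inequality) auto
  then show ?thesis
    using normal_distributed_expectation[OF s W] normal_distributed_variance[OF s W] by simp
qed

locale gaussian_design = prob_space M for M :: "'a measure" +
  fixes X :: "nat \<Rightarrow> nat \<Rightarrow> real" and \<eta> :: "nat \<Rightarrow> 'a \<Rightarrow> real" and n p :: nat and \<sigma> :: real
  assumes n_pos: "1 \<le> n"
    and cols_normalized: "\<forall>j<p. (\<Sum>i<n. (X i j)\<^sup>2) = real n"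
    and sigma_pos: "0 < \<sigma>"
    and noise_indep: "indep_vars (\<lambda>_. borel) \<eta> {..<n}"
    and noise_normal: "\<forall>i<n. distributed M lborel (\<eta> i) (normal_density 0 \<sigma>)"
begin

lemma col_inner_noise_measurable[measurable]:
  "(\<lambda>\<omega>. col_inner X n (\<lambda>i. \<eta> i \<omega>) j) \<in> borel_measurable M"
proof -
  have "\<eta> i \<in> borel_measurable M" if "i \<in> {..<n}" for i
    using distributed_measurable[OF noise_normal[rule_format]] that by simp
  then show ?thesis unfolding col_inner_def by measurable
qed

lemma lam0_noise_measurable[measurable]:
  "(\<lambda>\<omega>. lam0 X n p (\<lambda>i. c i + \<eta> i \<omega>)) \<in> borel_measurable M"
  unfolding lam0_eq_Max_col_inner col_inner_add by measurable

lemma col_inner_noise_distributed: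
  assumes "j < p"
  shows "distributed M lborel (\<lambda>\<omega>. col_inner X n (\<lambda>i. \<eta> i \<omega>) j) (normal_density 0 (\<sigma> / sqrt (real n)))"
proof -
  have norm: "(\<Sum>i<n. (X i j / real n)\<^sup>2) = 1 / real n"
    using cols_normalized assms n_pos by (simp add: power_divide flip: sum_divide_distrib) (simp add: power2_eq_square)
  have "\<exists>i<n. X i j / real n \<noteq> 0"
  proof (rule ccontr)
    assume "\<not> ?thesis"
    then have "(\<Sum>i<n. (X i j / real n)\<^sup>2) = 0" by simp
    with norm n_pos show False by simp
  qed
  from weighted_sum_indep_normal[OF noise_indep noise_normal sigma_pos this]
  show ?thesis
    unfolding col_inner_def norm by (simp add: sum_divide_distrib real_sqrt_divide)
qed

lemma prob_col_inner_noise_ge: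
  assumes "j < p" "0 < t"
  shows "prob {\<omega> \<in> space M. t \<le> \<bar>col_inner X n (\<lambda>i. \<eta> i \<omega>) j\<bar>} \<le> \<sigma>\<^sup>2 / (real n * t\<^sup>2)"
  using Chebyshev_normal[OF _ col_inner_noise_distributed[OF assms(1)] assms(2)] sigma_pos n_pos
  by (simp add: power_divide)

lemma AE_lam0_noise_neq:
  assumes "1 \<le> p"
  shows "AE \<omega> in M. \<forall>k::nat. lam0 X n p (\<lambda>i. c i + \<eta> i \<omega>) \<noteq> v k"
proof -
  let ?W = "\<lambda>j \<omega>. col_inner X n (\<lambda>i. \<eta> i \<omega>) j"
  have "AE \<omega> in M. \<forall>k. \<forall>j\<in>{..<p}. ?W j \<omega> \<noteq> v k - col_inner X n c j \<and> ?W j \<omega> \<noteq> - v k - col_inner X n c j"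
    unfolding AE_all_countable
    by (auto simp: AE_ball_countable intro!: AE_conjI AE_distributed_lborel_neq col_inner_noise_distributed)
  then show ?thesis
  proof (rule AE_mp, intro AE_I2 impI allI notI)
    fix \<omega> k
    assume avoid: "\<forall>k. \<forall>j\<in>{..<p}. ?W j \<omega> \<noteq> v k - col_inner X n c j \<and> ?W j \<omega> \<noteq> - v k - col_inner X n c j"
      and "lam0 X n p (\<lambda>i. c i + \<eta> i \<omega>) = v k"
    then obtain j where "j < p" "\<bar>col_inner X n c j + ?W j \<omega>\<bar> = v k"
      using lam0_in_col_inners[OF assms, of X n "\<lambda>i. c i + \<eta> i \<omega>"] by (auto simp: col_inner_add)
    moreover have "?W j \<omega> \<noteq> v k - col_inner X n c j" "?W j \<omega> \<noteq> - v k - col_inner X n c j"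
      using avoid \<open>j < p\<close> by auto
    ultimately show False by linarith
  qed
qed

lemma prob_crossing_index_ge:
  assumes j: "j < p" and L: "0 < L" and t: "0 < t" and b: "13 / 5 * L \<le> b"
    and signal: "L < (\<bar>col_inner X n c j\<bar> - t) * gam"
  shows "1 - \<sigma>\<^sup>2 / (real n * t\<^sup>2)
    \<le> prob {\<omega> \<in> space M. \<exists>N. crossing_index (lam0 X n p (\<lambda>i. c i + \<eta> i \<omega>)) L b N}"
proof -
  let ?l0 = "\<lambda>\<omega>. lam0 X n p (\<lambda>i. c i + \<eta> i \<omega>)" and ?W = "\<lambda>\<omega>. col_inner X n (\<lambda>i. \<eta> i \<omega>) j"
  let ?E = "{\<omega> \<in> space M. \<exists>N. crossing_index (?l0 \<omega>) L b N}"
  define S where "S = {\<omega> \<in> space M. \<bar>?W \<omega>\<bar> < t}"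
  have "1 \<le> p" using j by simp
  then have "AE \<omega> in M. \<forall>k. ?l0 \<omega> \<noteq> L / gam ^ k" by (rule AE_lam0_noise_neq)
  then have "AE \<omega> in M. \<omega> \<in> S \<longrightarrow> \<omega> \<in> ?E"
  proof (rule AE_mp, intro AE_I2 impI)
    fix \<omega> assume avoid: "\<forall>k. ?l0 \<omega> \<noteq> L / gam ^ k" and "\<omega> \<in> S"
    have "\<bar>col_inner X n c j\<bar> - \<bar>?W \<omega>\<bar> \<le> \<bar>col_inner X n (\<lambda>i. c i + \<eta> i \<omega>) j\<bar>"
      unfolding col_inner_add by linarith
    also have "\<dots> \<le> ?l0 \<omega>" by (rule col_inner_le_lam0[OF j])
    finally have "L < ?l0 \<omega> * gam"
      using signal \<open>\<omega> \<in> S\<close> unfolding S_def gam_def by simp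
    moreover have "\<forall>k. ?l0 \<omega> * gam ^ k \<noteq> L"
      using avoid by (simp add: gam_def eq_divide_eq)
    ultimately show "\<omega> \<in> ?E" using \<open>\<omega> \<in> S\<close> crossing_index_exists[OF L _ _ b] by (auto simp: S_def)
  qed
  then have "prob S \<le> prob ?E"
    by (rule finite_measure_mono_AE) (unfold crossing_index_def, measurable)
  moreover have "space M - S = {\<omega> \<in> space M. t \<le> \<bar>?W \<omega>\<bar>}" by (auto simp: S_def)
  then have "prob (space M - S) \<le> \<sigma>\<^sup>2 / (real n * t\<^sup>2)" using prob_col_inner_noise_ge[OF j t] by simp
  moreover have "prob (space M - S) = 1 - prob S" by (rule prob_compl) (simp add: S_def)
  ultimately show ?thesis by linarith
qed

end

theorem mainTheorem9:
  fixes M :: "'a measure"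
    and X :: "nat \<Rightarrow> nat \<Rightarrow> real" and \<beta> :: "nat \<Rightarrow> real"
    and \<eta> :: "nat \<Rightarrow> 'a \<Rightarrow> real"
    and n p :: nat and \<sigma> :: real
  assumes "prob_space M"
    and n_pos: "n \<ge> 1" and p_ge: "p \<ge> 2"
    and cols: "\<forall>j<p. (\<Sum>i<n. (X i j)\<^sup>2) = real n"
    and supp_ne: "supp \<beta> p \<noteq> {}"
    and A1: "real (card (supp \<beta> p)) * coherence X n p \<le> 1 / 4"
    and A2: "beta_min \<beta> p \<ge> 78 * lambda_u \<sigma> n p"
    and sigma_pos: "\<sigma> > 0"
    and A3_indep: "prob_space.indep_vars M (\<lambda>_. borel) \<eta> {..<n}"
    and A3_gauss: "\<forall>i<n. distributed M lborel (\<eta> i) (normal_density 0 \<sigma>)"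
  shows "measure M {\<omega> \<in> space M.
           let y = (\<lambda>i. (\<Sum>j<p. X i j * \<beta> j) + \<eta> i \<omega>);
               l0 = lam0 X n p y;
               lam = (\<lambda>t::nat. l0 * gam ^ t)
           in \<exists>N::nat. 1 \<le> N \<and> real N < log gam (10 * delta_u \<sigma> n p / l0)
                 \<and> lam N > 10 * delta_u \<sigma> n p \<and> 10 * delta_u \<sigma> n p \<ge> lam (N + 1)
                 \<and> beta_min \<beta> p > 8 / 5 * lam N}
         \<ge> 1 - 1 / (2 * sqrt (pi * ln (real p)))"
proof -
  interpret gaussian_design M X \<eta> n p \<sigma>
    using assms by (simp add: gaussian_design_def gaussian_design_axioms_def)
  define lu where "lu = lambda_u \<sigma> n p"
  have "ln 2 \<le> ln (real p)" using p_ge by simp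
  then have ln_p: "1 / 2 \<le> ln (real p)" using ln2_ge_two_thirds by linarith
  then have lu: "0 < lu" unfolding lu_def lambda_u_def using sigma_pos n_pos by simp
  have fin: "finite (supp \<beta> p)" by (simp add: supp_def)
  obtain j0 where j0: "j0 \<in> supp \<beta> p" and "Max ((\<lambda>j. \<bar>\<beta> j\<bar>) ` supp \<beta> p) = \<bar>\<beta> j0\<bar>"
    using obtains_MAX[OF fin supp_ne] .
  then have max: "\<forall>k\<in>supp \<beta> p. \<bar>\<beta> k\<bar> \<le> \<bar>\<beta> j0\<bar>" using fin by (metis Max_ge finite_imageI imageI)
  have "beta_min \<beta> p \<le> \<bar>\<beta> j0\<bar>" unfolding beta_min_def using fin j0 by simp
  then have "117 / 2 * lu \<le> \<bar>col_inner X n (\<lambda>i. \<Sum>j<p. X i j * \<beta> j) j0\<bar>"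
    using abs_col_inner_signal_ge[OF n_pos p_ge cols j0 max A1] A2 unfolding lu_def by linarith
  then have "1 - \<sigma>\<^sup>2 / (real n * (9 * lu)\<^sup>2) \<le> prob {\<omega> \<in> space M. \<exists>N. crossing_index
      (lam0 X n p (\<lambda>i. (\<Sum>j<p. X i j * \<beta> j) + \<eta> i \<omega>)) (10 * delta_u \<sigma> n p) (beta_min \<beta> p) N}"
    using j0 lu A2 by (intro prob_crossing_index_ge) (auto simp: supp_def delta_u_def lu_def gam_def)
  moreover have "\<sigma>\<^sup>2 / (real n * (9 * lu)\<^sup>2) = 1 / (162 * ln (real p))"
    unfolding lu_def lambda_u_def using sigma_pos n_pos ln_p by (simp add: power_mult_distrib field_simps)
  ultimately show ?thesis
    using inverse_162_le_inverse_2_sqrt_pi[OF ln_p] unfolding crossing_index_def Let_def by simp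
qed

end
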